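(* Let $1\le s\le n$, $0<\gamma<1$, and let $\mathbf{A}\in\mathbb{R}^{m\times n}$ satisfy $\inf\{\|\mathbf{A}\mathbf{v}\|_2:\mathbf{v}\in S_\gamma\}\ge\eta$ for some $\eta>0$. Let $\mathbf{x}\in\mathbb{R}^n$, $\mathbf{y}=\mathbf{A}\mathbf{x}+\mathbf{e}$ with $\|\mathbf{e}\|_2\le\epsilon$, and let $\widehat{\mathbf{x}}$ be a minimizer of $\|\mathbf{z}\|_1$ over $\mathbf{z}\in\mathbb{R}^n$ subject to $\|\mathbf{y}-\mathbf{A}\mathbf{z}\|_2\le\epsilon$. Then \[ \|\widehat{\mathbf{x}}-\mathbf{x}\|_2\ \le\ \frac{2\gamma+2}{1-\gamma}\,\sigma_s(\mathbf{x})+\frac{2\epsilon}{\eta}. \]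
   Context: $S_\gamma:=\{\mathbf{v}\in\mathbb{R}^n:\|\mathbf{v}\|_2=1,\ \|\mathbf{v}_T\|_1\ge\gamma\|\mathbf{v}_{T^c}\|_1\text{ for some }T\subset[n],|T|\le s\}$, where $\mathbf{v}_T$ agrees with $\mathbf{v}$ on $T$ and is $0$ elsewhere. $\sigma_s(\mathbf{x}):=\inf\{\|\mathbf{x}-\mathbf{v}\|_1:\mathbf{v}\text{ has at most }s\text{ nonzero entries}\}$. *)

theory Defs
  imports "HOL-Analysis.Analysis"
begin

text \<open>Vectors in R^n are modelled as real^'n (the index type 'n has n elements);
matrices in R^{m x n} as real^'n^'m.\<close>

definition l1norm :: "real^'n \<Rightarrow> real" where
  "l1norm v = (\<Sum>i\<in>UNIV. \<bar>v $ i\<bar>)"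

definition restrict_vec :: "real^'n \<Rightarrow> 'n set \<Rightarrow> real^'n" where
  "restrict_vec v T = (\<chi> i. if i \<in> T then v $ i else 0)"

definition S_gamma :: "nat \<Rightarrow> real \<Rightarrow> (real^'n) set" where
  "S_gamma s \<gamma> = {v. norm v = 1 \<and>
     (\<exists>T. card T \<le> s \<and> l1norm (restrict_vec v T) \<ge> \<gamma> * l1norm (restrict_vec v (- T)))}"

definition sigma_s :: "nat \<Rightarrow> real^'n \<Rightarrow> real" where
  "sigma_s s x = Inf {l1norm (x - v) | v. card {i. v $ i \<noteq> 0} \<le> s}"

end

theory Submission
  imports Defs
begin

text \<open>Let \<open>h = xhat - x\<close> and let \<open>T\<close> be the support of an \<open>s\<close>-sparse \<open>v\<close>.
  Minimality of the l1 norm of \<open>xhat\<close> bounds the l1 mass of \<open>h\<close> off \<open>T\<close> by its mass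
  on \<open>T\<close> plus twice the mass of \<open>x\<close> off \<open>T\<close>, which is at most \<open>l1norm (x - v)\<close>.
  If the mass of \<open>h\<close> on \<open>T\<close> is at least \<open>\<gamma>\<close> times its mass off \<open>T\<close>, then
  \<open>h / norm h \<in> S_gamma s \<gamma>\<close>, so \<open>\<eta> * norm h \<le> norm (A *v h) \<le> 2 * \<epsilon>\<close>.
  Otherwise the off-\<open>T\<close> mass dominates, and bounding \<open>norm h\<close> by \<open>l1norm h\<close> gives
  \<open>norm h \<le> (2 * \<gamma> + 2) / (1 - \<gamma>) * l1norm (x - v)\<close>. Taking the infimum over \<open>v\<close>
  yields the bound with \<open>sigma_s s x\<close>.\<close>

lemma l1norm_nonneg: "0 \<le> l1norm v"
  unfolding l1norm_def by (simp add: sum_nonneg)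

lemma l1norm_restrict_vec: "l1norm (restrict_vec v T) = (\<Sum>i\<in>T. \<bar>v $ i\<bar>)"
proof -
  have "l1norm (restrict_vec v T) = (\<Sum>i\<in>UNIV. if i \<in> T then \<bar>v $ i\<bar> else 0)"
    unfolding l1norm_def restrict_vec_def by (intro sum.cong) auto
  also have "\<dots> = (\<Sum>i\<in>T. \<bar>v $ i\<bar>)"
    by (simp add: sum.If_cases)
  finally show ?thesis .
qed

lemma l1norm_split: "l1norm v = (\<Sum>i\<in>T. \<bar>v $ i\<bar>) + (\<Sum>i\<in>-T. \<bar>v $ i\<bar>)"
proof -
  have "l1norm v = (\<Sum>i\<in>T \<union> -T. \<bar>v $ i\<bar>)"
    unfolding l1norm_def by (simp add: Compl_partition)
  also have "\<dots> = (\<Sum>i\<in>T. \<bar>v $ i\<bar>) + (\<Sum>i\<in>-T. \<bar>v $ i\<bar>)"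
    by (rule sum.union_disjoint) auto
  finally show ?thesis .
qed

lemma sum_off_support_le_l1norm_diff:
  "(\<Sum>i\<in>-{i. v $ i \<noteq> 0}. \<bar>x $ i\<bar>) \<le> l1norm (x - v)"
proof -
  have "(\<Sum>i\<in>-{i. v $ i \<noteq> 0}. \<bar>x $ i\<bar>) = (\<Sum>i\<in>-{i. v $ i \<noteq> 0}. \<bar>(x - v) $ i\<bar>)"
    by (intro sum.cong) auto
  also have "\<dots> \<le> l1norm (x - v)"
    using l1norm_split[of "x - v" "{i. v $ i \<noteq> 0}"] by (simp add: sum_nonneg)
  finally show ?thesis .
qed

lemma l1norm_le_imp_tail_bound:
  fixes x h :: "real^'n"
  assumes "l1norm (x + h) \<le> l1norm x"
  shows "(\<Sum>i\<in>-T. \<bar>h $ i\<bar>) \<le> (\<Sum>i\<in>T. \<bar>h $ i\<bar>) + 2 * (\<Sum>i\<in>-T. \<bar>x $ i\<bar>)"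
proof -
  have "(\<Sum>i\<in>T. \<bar>x $ i\<bar> - \<bar>h $ i\<bar>) \<le> (\<Sum>i\<in>T. \<bar>(x + h) $ i\<bar>)"
    by (intro sum_mono) auto
  moreover have "(\<Sum>i\<in>-T. \<bar>h $ i\<bar> - \<bar>x $ i\<bar>) \<le> (\<Sum>i\<in>-T. \<bar>(x + h) $ i\<bar>)"
    by (intro sum_mono) auto
  ultimately show ?thesis
    using assms l1norm_split[of "x + h" T] l1norm_split[of x T] by (simp add: sum_subtractf)
qed

lemma normalized_in_S_gamma:
  fixes h :: "real^'n"
  assumes "h \<noteq> 0" and "card T \<le> s" and "\<gamma> * (\<Sum>i\<in>-T. \<bar>h $ i\<bar>) \<le> (\<Sum>i\<in>T. \<bar>h $ i\<bar>)"
  shows "h /\<^sub>R norm h \<in> S_gamma s \<gamma>"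
proof -
  have hn: "norm h > 0" using assms(1) by simp
  have restrict: "l1norm (restrict_vec (h /\<^sub>R norm h) U) = (\<Sum>i\<in>U. \<bar>h $ i\<bar>) / norm h" for U
    unfolding l1norm_restrict_vec using hn by (simp add: abs_mult sum_distrib_left divide_inverse mult.commute)
  have "\<gamma> * ((\<Sum>i\<in>-T. \<bar>h $ i\<bar>) / norm h) \<le> (\<Sum>i\<in>T. \<bar>h $ i\<bar>) / norm h"
    using assms(3) hn by (simp add: divide_right_mono)
  then show ?thesis
    unfolding S_gamma_def using hn assms(2) restrict by auto
qed

lemma lower_bound_on_cone:
  fixes A :: "real^'n^'m" and h :: "real^'n"
  assumes "\<forall>w\<in>S_gamma s \<gamma>. \<eta> \<le> norm (A *v w)"
    and "card T \<le> s" and "\<gamma> * (\<Sum>i\<in>-T. \<bar>h $ i\<bar>) \<le> (\<Sum>i\<in>T. \<bar>h $ i\<bar>)"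
  shows "\<eta> * norm h \<le> norm (A *v h)"
proof (cases "h = 0")
  case False
  then have "\<eta> \<le> norm (A *v (h /\<^sub>R norm h))"
    using assms normalized_in_S_gamma by blast
  also have "\<dots> = norm (A *v h) / norm h"
    by (simp add: matrix_vector_mult_scaleR divide_inverse)
  finally show ?thesis
    using False by (simp add: pos_le_divide_eq)
qed simp

lemma norm_error_le_sparse_approx:
  fixes A :: "real^'n^'m" and x h v :: "real^'n"
  assumes "0 \<le> \<gamma>" and "\<gamma> < 1" and "\<eta> > 0"
    and "\<forall>w\<in>S_gamma s \<gamma>. \<eta> \<le> norm (A *v w)"
    and "norm (A *v h) \<le> \<delta>" and "l1norm (x + h) \<le> l1norm x"
    and "card {i. v $ i \<noteq> 0} \<le> s"
  shows "norm h \<le> (2 * \<gamma> + 2) / (1 - \<gamma>) * l1norm (x - v) + \<delta> / \<eta>"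
proof -
  define T where "T = {i. v $ i \<noteq> 0}"
  define a where "a = (\<Sum>i\<in>T. \<bar>h $ i\<bar>)"
  define b where "b = (\<Sum>i\<in>-T. \<bar>h $ i\<bar>)"
  define d where "d = l1norm (x - v)"
  have C_d_nonneg: "0 \<le> (2 * \<gamma> + 2) / (1 - \<gamma>) * d"
    unfolding d_def using assms(1,2) by (simp add: l1norm_nonneg)
  have \<delta>_\<eta>_nonneg: "0 \<le> \<delta> / \<eta>"
    using assms(3,5) norm_ge_zero[of "A *v h"] by (meson divide_nonneg_pos order_trans)
  show ?thesis
  proof (cases "\<gamma> * b \<le> a")
    case True
    then have "\<eta> * norm h \<le> \<delta>"
      using lower_bound_on_cone[OF assms(4)] assms(5,7) unfolding a_def b_def T_def
      by (meson order_trans)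
    then have "norm h \<le> \<delta> / \<eta>"
      using assms(3) by (simp add: pos_le_divide_eq mult.commute)
    then show ?thesis using C_d_nonneg unfolding d_def by linarith
  next
    case False
    have "b \<le> a + 2 * d"
      using l1norm_le_imp_tail_bound[OF assms(6), of T] sum_off_support_le_l1norm_diff[of x v]
      unfolding a_def b_def d_def T_def by linarith
    with False have "b \<le> 2 * d / (1 - \<gamma>)"
      using assms(2) by (simp add: field_simps)
    have "norm h \<le> a + b"
      using norm_le_l1_cart[of h] l1norm_split[of h T] unfolding a_def b_def l1norm_def by simp
    also have "\<dots> \<le> (1 + \<gamma>) * b"
      using False by (simp add: algebra_simps)
    also have "\<dots> \<le> (1 + \<gamma>) * (2 * d / (1 - \<gamma>))"
      using \<open>b \<le> 2 * d / (1 - \<gamma>)\<close> assms(1) by (intro mult_left_mono) auto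
    also have "\<dots> = (2 * \<gamma> + 2) / (1 - \<gamma>) * d"
      by (simp add: field_simps)
    finally show ?thesis using \<delta>_\<eta>_nonneg unfolding d_def by linarith
  qed
qed

lemma le_sigma_s_affine:
  fixes x :: "real^'n"
  assumes "C > 0" and "\<And>v. card {i. v $ i \<noteq> 0} \<le> s \<Longrightarrow> B \<le> C * l1norm (x - v) + D"
  shows "B \<le> C * sigma_s s x + D"
proof -
  have "(B - D) / C \<le> sigma_s s x"
    unfolding sigma_s_def
  proof (rule cInf_greatest)
    show "{l1norm (x - v) |v. card {i. v $ i \<noteq> 0} \<le> s} \<noteq> {}"
      by (auto intro!: exI[of _ 0])
  next
    fix r assume "r \<in> {l1norm (x - v) |v. card {i. v $ i \<noteq> 0} \<le> s}"
    then show "(B - D) / C \<le> r"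
      using assms by (force simp: divide_le_eq mult.commute)
  qed
  then show ?thesis
    using assms(1) by (simp add: divide_le_eq mult.commute)
qed

theorem theorem4p10:
  fixes A :: "real^'n^'m" and x xhat :: "real^'n" and e and y :: "real^'m"
    and s :: nat and \<gamma> \<eta> \<epsilon> :: real
  assumes "1 \<le> s" and "s \<le> CARD('n)"
    and "0 < \<gamma>" and "\<gamma> < 1"
    and "\<eta> > 0"
    and "Inf ((\<lambda>v. norm (A *v v)) ` S_gamma s \<gamma>) \<ge> \<eta>"
    and "y = A *v x + e" and "norm e \<le> \<epsilon>"
    and "norm (y - A *v xhat) \<le> \<epsilon>"
    and "\<forall>z. norm (y - A *v z) \<le> \<epsilon> \<longrightarrow> l1norm xhat \<le> l1norm z"
  shows "norm (xhat - x) \<le> (2 * \<gamma> + 2) / (1 - \<gamma>) * sigma_s s x + 2 * \<epsilon> / \<eta>"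
proof (rule le_sigma_s_affine)
  show "(2 * \<gamma> + 2) / (1 - \<gamma>) > 0" using assms(3,4) by simp
next
  have "Inf ((\<lambda>v. norm (A *v v)) ` S_gamma s \<gamma>) \<le> norm (A *v w)" if "w \<in> S_gamma s \<gamma>" for w
    using that by (intro cInf_lower bdd_belowI[where m = 0]) auto
  then have lower: "\<forall>w\<in>S_gamma s \<gamma>. \<eta> \<le> norm (A *v w)"
    using assms(6) order_trans by blast
  have "A *v (xhat - x) = e - (y - A *v xhat)"
    using assms(7) by (simp add: matrix_vector_mult_diff_distrib)
  then have "norm (A *v (xhat - x)) \<le> 2 * \<epsilon>"
    using norm_triangle_ineq4[of e "y - A *v xhat"] assms(8,9) by simp
  moreover have "l1norm (x + (xhat - x)) \<le> l1norm x"
    using assms(7,8,10) by simp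
  ultimately show "norm (xhat - x) \<le> (2 * \<gamma> + 2) / (1 - \<gamma>) * l1norm (x - v) + 2 * \<epsilon> / \<eta>"
    if "card {i. v $ i \<noteq> 0} \<le> s" for v
    using norm_error_le_sparse_approx[OF _ assms(4,5) lower] assms(3) that by simp
qed

end
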